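(* Let $(\mathcal{P},+)$ be a reparametrization category. For all $\ell',\ell''\in\mathrm{Obj}(\mathcal{P})$ there is an isomorphism of $\mathcal{P}$-spaces, natural with respect to $\ell'$ and $\ell''$, \[\int^{\ell}\mathcal{P}(-,\ell+\ell')\times\mathcal{P}(\ell,\ell'')\cong\mathcal{P}(-,\ell''+\ell'),\] which takes the equivalence class of $(\psi,\phi)\in\mathcal{P}(-,\ell+\ell')\times\mathcal{P}(\ell,\ell'')$ to $(\phi\otimes\mathrm{id}_{\ell'})\psi$.
   Context: All enriched categories are enriched over the cartesian closed category $\mathbf{Top}$ of ($\Delta$-generated) topological spaces. A reparametrization category is a small enriched semimonoidal category $(\mathcal{P},\otimes)$ (enriched meaning the hom-sets are spaces, composition is continuous and $\mathcal{P}(a,b)\times\mathcal{P}(c,d)\to\mathcal{P}(a\otimes c,b\otimes d)$ is continuous) such that: (1) the semimonoidal structure is strict; (2) all spaces $\mathcal{P}(\ell,\ell')$ are contractible; (3) for every map $\phi:\ell\to\ell'$ and all objects $\ell'_1,\ell'_2$ with $\ell'_1\otimes\ell'_2=\ell'$, there exist maps $\phi_1:\ell_1\to\ell'_1$, $\phi_2:\ell_2\to\ell'_2$ with $\phi=\phi_1\otimes\phi_2$. One writes $\ell+\ell':=\ell\otimes\ell'$ on objects. A $\mathcal{P}$-space is an enriched functor $\mathcal{P}^{op}\to\mathbf{Top}$; the coend is taken in the category of $\mathcal{P}$-spaces. *)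

theory Defs
  imports "HOL-Analysis.Analysis" "HOL-Homology.Homology"
begin

definition simplex_top :: "nat \<Rightarrow> (nat \<Rightarrow> real) topology" where
  "simplex_top n = subtopology (powertop_real UNIV) (standard_simplex n)"

definition dtop :: "'a topology \<Rightarrow> 'a topology" where
  "dtop X = topology (\<lambda>U. U \<subseteq> topspace X \<and>
     (\<forall>n \<sigma>. continuous_map (simplex_top n) X \<sigma> \<longrightarrow>
        openin (simplex_top n) {t \<in> topspace (simplex_top n). \<sigma> t \<in> U}))"

definition delta_generated :: "'a topology \<Rightarrow> bool" where
  "delta_generated X \<longleftrightarrow> dtop X = X"

definition dprod :: "'a topology \<Rightarrow> 'b topology \<Rightarrow> ('a \<times> 'b) topology" where
  "dprod X Y = dtop (prod_topology X Y)"

definition contractible_top :: "'a topology \<Rightarrow> bool" where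
  "contractible_top X \<longleftrightarrow> topspace X \<noteq> {} \<and> contractible_space X"

definition quot_top :: "'a topology \<Rightarrow> ('a \<times> 'a) set \<Rightarrow> 'a set topology" where
  "quot_top X E = topology (\<lambda>U. U \<subseteq> topspace X // E \<and> openin X (\<Union>U))"

text \<open>A small category enriched over Delta-generated spaces with a strict semimonoidal
structure.  Objects are the elements of type 'o; Hom P a b is the hom-space
(its carrier is the hom-set).\<close>

record ('o, 'm) ecat =
  Hom  :: "'o \<Rightarrow> 'o \<Rightarrow> 'm topology"
  Comp :: "'m \<Rightarrow> 'm \<Rightarrow> 'm"     (* Comp g f = g \<circ> f *)
  Ident :: "'o \<Rightarrow> 'm"
  TenO :: "'o \<Rightarrow> 'o \<Rightarrow> 'o"
  TenM :: "'m \<Rightarrow> 'm \<Rightarrow> 'm"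

abbreviation hom :: "('o, 'm, 'x) ecat_scheme \<Rightarrow> 'o \<Rightarrow> 'o \<Rightarrow> 'm set" where
  "hom P a b \<equiv> topspace (Hom P a b)"

definition reparam_cat :: "('o, 'm, 'x) ecat_scheme \<Rightarrow> bool" where
  "reparam_cat P \<longleftrightarrow>
    \<comment> \<open>category: disjoint hom-sets, identities, composition, unit and associativity laws\<close>
    (\<forall>a b a' b' f. f \<in> hom P a b \<and> f \<in> hom P a' b' \<longrightarrow> a = a' \<and> b = b') \<and>
    (\<forall>a. Ident P a \<in> hom P a a) \<and>
    (\<forall>a b c f g. f \<in> hom P a b \<and> g \<in> hom P b c \<longrightarrow> Comp P g f \<in> hom P a c) \<and>
    (\<forall>a b f. f \<in> hom P a b \<longrightarrow> Comp P (Ident P b) f = f \<and> Comp P f (Ident P a) = f) \<and>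
    (\<forall>a b c d f g h. f \<in> hom P a b \<and> g \<in> hom P b c \<and> h \<in> hom P c d \<longrightarrow>
        Comp P h (Comp P g f) = Comp P (Comp P h g) f) \<and>
    \<comment> \<open>enrichment over Delta-generated spaces\<close>
    (\<forall>a b. delta_generated (Hom P a b)) \<and>
    (\<forall>a b c. continuous_map (dprod (Hom P a b) (Hom P b c)) (Hom P a c)
                (\<lambda>(f, g). Comp P g f)) \<and>
    \<comment> \<open>semimonoidal structure: a bifunctor, continuous on hom-spaces\<close>
    (\<forall>a b c d f g. f \<in> hom P a b \<and> g \<in> hom P c d \<longrightarrow>
        TenM P f g \<in> hom P (TenO P a c) (TenO P b d)) \<and>
    (\<forall>a c. TenM P (Ident P a) (Ident P c) = Ident P (TenO P a c)) \<and>
    (\<forall>a b e c d e' f g f' g'. f \<in> hom P a b \<and> g \<in> hom P b e \<and>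
        f' \<in> hom P c d \<and> g' \<in> hom P d e' \<longrightarrow>
        TenM P (Comp P g f) (Comp P g' f') = Comp P (TenM P g g') (TenM P f f')) \<and>
    (\<forall>a b c d. continuous_map (dprod (Hom P a b) (Hom P c d))
                  (Hom P (TenO P a c) (TenO P b d)) (\<lambda>(f, g). TenM P f g)) \<and>
    \<comment> \<open>(1) strictness: associativity holds on the nose\<close>
    (\<forall>a b c. TenO P (TenO P a b) c = TenO P a (TenO P b c)) \<and>
    (\<forall>a b c d e e' f g h. f \<in> hom P a b \<and> g \<in> hom P c d \<and> h \<in> hom P e e' \<longrightarrow>
        TenM P (TenM P f g) h = TenM P f (TenM P g h)) \<and>
    \<comment> \<open>(2) all hom-spaces contractible\<close>
    (\<forall>a b. contractible_top (Hom P a b)) \<and>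
    \<comment> \<open>(3) splitting of morphisms along a splitting of the codomain\<close>
    (\<forall>l l' l1' l2' \<phi>. \<phi> \<in> hom P l l' \<and> TenO P l1' l2' = l' \<longrightarrow>
        (\<exists>l1 l2 \<phi>1 \<phi>2. \<phi>1 \<in> hom P l1 l1' \<and> \<phi>2 \<in> hom P l2 l2' \<and>
            TenO P l1 l2 = l \<and> \<phi> = TenM P \<phi>1 \<phi>2))"

text \<open>The coproduct over l of P(k, l+l') \<times> P(l, l''); elements are tagged
triples (l, psi, phi).\<close>
definition coend_sum :: "('o, 'm, 'x) ecat_scheme \<Rightarrow> 'o \<Rightarrow> 'o \<Rightarrow> 'o \<Rightarrow> ('o \<times> 'm \<times> 'm) topology" where
  "coend_sum P k l' l'' =
     sum_topology (\<lambda>l. dprod (Hom P k (TenO P l l')) (Hom P l l'')) UNIV"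

definition coend_gen :: "('o, 'm, 'x) ecat_scheme \<Rightarrow> 'o \<Rightarrow> 'o \<Rightarrow> 'o \<Rightarrow> (('o \<times> 'm \<times> 'm) \<times> ('o \<times> 'm \<times> 'm)) set" where
  "coend_gen P k l' l'' =
     {((b, Comp P (TenM P \<kappa> (Ident P l')) \<psi>, \<phi>), (a, \<psi>, Comp P \<phi> \<kappa>)) | a b \<kappa> \<psi> \<phi>.
        \<kappa> \<in> hom P a b \<and> \<psi> \<in> hom P k (TenO P a l') \<and> \<phi> \<in> hom P b l''}"

definition coend_eqv :: "('o, 'm, 'x) ecat_scheme \<Rightarrow> 'o \<Rightarrow> 'o \<Rightarrow> 'o \<Rightarrow> (('o \<times> 'm \<times> 'm) \<times> ('o \<times> 'm \<times> 'm)) set" where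
  "coend_eqv P k l' l'' =
     Id_on (topspace (coend_sum P k l' l'')) \<union>
     (coend_gen P k l' l'' \<union> (coend_gen P k l' l'')\<inverse>)\<^sup>+"

text \<open>The coend (\<integral>^l P(-, l+l') \<times> P(l, l''))(k) as a (quotient) space.\<close>
definition coend_space :: "('o, 'm, 'x) ecat_scheme \<Rightarrow> 'o \<Rightarrow> 'o \<Rightarrow> 'o \<Rightarrow> ('o \<times> 'm \<times> 'm) set topology" where
  "coend_space P k l' l'' = quot_top (coend_sum P k l' l'') (coend_eqv P k l' l'')"

definition coend_class :: "('o, 'm, 'x) ecat_scheme \<Rightarrow> 'o \<Rightarrow> 'o \<Rightarrow> 'o \<Rightarrow> 'o \<times> 'm \<times> 'm \<Rightarrow> ('o \<times> 'm \<times> 'm) set" where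
  "coend_class P k l' l'' x = coend_eqv P k l' l'' `` {x}"

end

theory Submission
  imports Defs
begin

(*
  This is the co-Yoneda lemma for the functor l \<mapsto> P(k, l + l'), and it only uses the
  category and bifunctor laws together with the continuity of composition and of the tensor
  product.

  The map (l, \<psi>, \<phi>) \<mapsto> (\<phi> + id) \<psi> on the coproduct is constant on the generating
  relation of the coend, by functoriality of - + l'.  Taking \<kappa> := \<phi> in that relation
  identifies (l, \<psi>, \<phi>) with (l'', (\<phi> + id) \<psi>, id), so f \<mapsto> (l'', f, id) is a continuous
  section meeting every class, and the induced map out of the quotient is a homeomorphism.
  Naturality reduces to associativity and the interchange law.
*)

lemma istopology_dtop:
  "istopology (\<lambda>U. U \<subseteq> topspace X \<and>
     (\<forall>n \<sigma>. continuous_map (simplex_top n) X \<sigma> \<longrightarrow>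
        openin (simplex_top n) {t \<in> topspace (simplex_top n). \<sigma> t \<in> U}))"
proof -
  have "{t \<in> topspace Z. \<sigma> t \<in> S \<inter> T} = {t \<in> topspace Z. \<sigma> t \<in> S} \<inter> {t \<in> topspace Z. \<sigma> t \<in> T}"
    "{t \<in> topspace Z. \<sigma> t \<in> \<Union>K} = (\<Union>S\<in>K. {t \<in> topspace Z. \<sigma> t \<in> S})"
    for Z S T K and \<sigma> :: "(nat \<Rightarrow> real) \<Rightarrow> 'a"
    by auto
  then show ?thesis
    unfolding istopology_def by (auto intro!: openin_Int openin_Union)
qed

lemma openin_dtop:
  "openin (dtop X) U \<longleftrightarrow> U \<subseteq> topspace X \<and>
     (\<forall>n \<sigma>. continuous_map (simplex_top n) X \<sigma> \<longrightarrow>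
        openin (simplex_top n) {t \<in> topspace (simplex_top n). \<sigma> t \<in> U})"
  unfolding dtop_def by (simp add: topology_inverse'[OF istopology_dtop])

lemma topspace_dtop [simp]: "topspace (dtop X) = topspace X"
proof (rule subset_antisym)
  show "topspace (dtop X) \<subseteq> topspace X"
    by (metis openin_dtop openin_topspace)
  have "openin (dtop X) (topspace X)"
    unfolding openin_dtop by (auto simp: continuous_map_def)
  then show "topspace X \<subseteq> topspace (dtop X)"
    by (rule openin_subset)
qed

lemma topspace_dprod [simp]: "topspace (dprod X Y) = topspace X \<times> topspace Y"
  by (simp add: dprod_def)

lemma continuous_map_dtop:
  assumes f: "continuous_map X Y f"
  shows "continuous_map (dtop X) (dtop Y) f"
  unfolding continuous_map_def
proof (intro conjI allI impI)
  show "f \<in> topspace (dtop X) \<rightarrow> topspace (dtop Y)"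
    using f by (auto simp: continuous_map_def)
next
  fix U assume U: "openin (dtop Y) U"
  have "openin (simplex_top n) {t \<in> topspace (simplex_top n). \<sigma> t \<in> {x \<in> topspace X. f x \<in> U}}"
    if \<sigma>: "continuous_map (simplex_top n) X \<sigma>" for n \<sigma>
  proof -
    have "continuous_map (simplex_top n) Y (f \<circ> \<sigma>)"
      using \<sigma> f by (rule continuous_map_compose)
    then have "openin (simplex_top n) {t \<in> topspace (simplex_top n). (f \<circ> \<sigma>) t \<in> U}"
      using U unfolding openin_dtop by blast
    moreover have "{t \<in> topspace (simplex_top n). (f \<circ> \<sigma>) t \<in> U} =
        {t \<in> topspace (simplex_top n). \<sigma> t \<in> {x \<in> topspace X. f x \<in> U}}"
      using \<sigma> by (auto simp: continuous_map_def)
    ultimately show ?thesis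
      by simp
  qed
  then show "openin (dtop X) {x \<in> topspace (dtop X). f x \<in> U}"
    by (simp add: openin_dtop)
qed

lemma continuous_map_into_dtop:
  "delta_generated Z \<Longrightarrow> continuous_map Z X f \<Longrightarrow> continuous_map Z (dtop X) f"
  using continuous_map_dtop unfolding delta_generated_def by metis

lemma continuous_map_sum_topologyI:
  assumes "\<And>i. i \<in> I \<Longrightarrow> continuous_map (X i) Y (\<lambda>x. f (i, x))"
  shows "continuous_map (sum_topology X I) Y f"
  unfolding continuous_map_def
proof (intro conjI allI impI)
  show "f \<in> topspace (sum_topology X I) \<rightarrow> topspace Y"
    using assms by (force simp: continuous_map_def)
next
  fix U assume "openin Y U"
  then have "openin (X i) {x \<in> topspace (X i). f (i, x) \<in> U}" if "i \<in> I" for i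
    using assms[OF that] by (simp add: continuous_map_def)
  then show "openin (sum_topology X I) {x \<in> topspace (sum_topology X I). f x \<in> U}"
    by (simp add: openin_sum_topology subset_iff)
qed

lemma istopology_quot_top:
  assumes "equiv (topspace X) E"
  shows "istopology (\<lambda>U. U \<subseteq> topspace X // E \<and> openin X (\<Union>U))"
  unfolding istopology_def
proof (rule conjI; intro allI impI)
  fix S T assume S: "S \<subseteq> topspace X // E \<and> openin X (\<Union>S)"
    and T: "T \<subseteq> topspace X // E \<and> openin X (\<Union>T)"
  have "\<Union>(S \<inter> T) = \<Union>S \<inter> \<Union>T"
    using S T quotient_disj[OF assms] by blast
  then show "S \<inter> T \<subseteq> topspace X // E \<and> openin X (\<Union>(S \<inter> T))"
    using S T by auto
next
  fix K assume K: "\<forall>S\<in>K. S \<subseteq> topspace X // E \<and> openin X (\<Union>S)"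
  then have "openin X (\<Union>S\<in>K. \<Union>S)"
    by (intro openin_Union) auto
  moreover have "\<Union>(\<Union>K) = (\<Union>S\<in>K. \<Union>S)"
    by blast
  ultimately show "\<Union>K \<subseteq> topspace X // E \<and> openin X (\<Union>(\<Union>K))"
    using K by auto
qed

lemma openin_quot_top:
  "equiv (topspace X) E \<Longrightarrow> openin (quot_top X E) U \<longleftrightarrow> U \<subseteq> topspace X // E \<and> openin X (\<Union>U)"
  unfolding quot_top_def by (simp add: topology_inverse'[OF istopology_quot_top])

lemma topspace_quot_top:
  assumes "equiv (topspace X) E"
  shows "topspace (quot_top X E) = topspace X // E"
proof (rule subset_antisym)
  show "topspace (quot_top X E) \<subseteq> topspace X // E"
    using assms by (metis openin_quot_top openin_topspace)
  have "openin (quot_top X E) (topspace X // E)"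
    using assms by (simp add: openin_quot_top Union_quotient)
  then show "topspace X // E \<subseteq> topspace (quot_top X E)"
    by (rule openin_subset)
qed

lemma quotient_map_quot_top:
  assumes E: "equiv (topspace X) E"
  shows "quotient_map X (quot_top X E) (\<lambda>x. E `` {x})"
  unfolding quotient_map_def
proof (intro conjI allI impI)
  show "(\<lambda>x. E `` {x}) ` topspace X = topspace (quot_top X E)"
    using E by (auto simp: topspace_quot_top quotient_def)
next
  fix U assume "U \<subseteq> topspace (quot_top X E)"
  then have U: "U \<subseteq> topspace X // E"
    using E by (simp add: topspace_quot_top)
  have "{x \<in> topspace X. E `` {x} \<in> U} = \<Union>U"
  proof
    show "\<Union>U \<subseteq> {x \<in> topspace X. E `` {x} \<in> U}"
    proof
      fix x assume "x \<in> \<Union>U"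
      then obtain c where c: "c \<in> U" "x \<in> c"
        by blast
      then obtain y where "c = E `` {y}"
        using U by (metis in_mono quotientE)
      with c have "(y, x) \<in> E"
        by blast
      then have "x \<in> topspace X" "E `` {x} = c"
        using equiv_type[OF E] equiv_class_eq[OF E] \<open>c = E `` {y}\<close> by auto
      then show "x \<in> {x \<in> topspace X. E `` {x} \<in> U}"
        using c by simp
    qed
    show "{x \<in> topspace X. E `` {x} \<in> U} \<subseteq> \<Union>U"
      using equiv_class_self[OF E] by blast
  qed
  then show "openin X {x \<in> topspace X. E `` {x} \<in> U} = openin (quot_top X E) U"
    using U E by (simp add: openin_quot_top)
qed

definition quot_lift :: "('a \<Rightarrow> 'b) \<Rightarrow> 'a set \<Rightarrow> 'b" where
  "quot_lift f c = f (SOME x. x \<in> c)"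

lemma quot_lift_class:
  assumes "equiv A E" "f respects E" "x \<in> A"
  shows "quot_lift f (E `` {x}) = f x"
proof -
  have "x \<in> E `` {x}"
    using assms(1,3) by (rule equiv_class_self)
  then have "(x, SOME y. y \<in> E `` {x}) \<in> E"
    by (metis Image_singleton_iff someI)
  then show ?thesis
    using assms(2) unfolding quot_lift_def congruent_def by auto
qed

lemma homeomorphic_map_quot_lift:
  assumes E: "equiv (topspace X) E"
    and f: "continuous_map X Y f" "f respects E"
    and s: "continuous_map Y X s" "\<And>y. y \<in> topspace Y \<Longrightarrow> f (s y) = y"
    and s_class: "\<And>x. x \<in> topspace X \<Longrightarrow> (x, s (f x)) \<in> E"
  shows "homeomorphic_map (quot_top X E) Y (quot_lift f)"
proof -
  let ?q = "\<lambda>x. E `` {x}"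
  have q: "quotient_map X (quot_top X E) ?q"
    using E by (rule quotient_map_quot_top)
  have "continuous_map X Y (quot_lift f \<circ> ?q)"
    using f(1) by (rule continuous_map_eq) (simp add: quot_lift_class[OF E f(2)])
  then have lift: "continuous_map (quot_top X E) Y (quot_lift f)"
    by (rule continuous_compose_quotient_map[OF q])
  have sect: "continuous_map Y (quot_top X E) (?q \<circ> s)"
    using s(1) quotient_imp_continuous_map[OF q] by (rule continuous_map_compose)
  show ?thesis
    unfolding homeomorphic_map_maps homeomorphic_maps_def
  proof (intro exI conjI ballI)
    show "continuous_map Y (quot_top X E) (?q \<circ> s)"
      by (fact sect)
    show "quot_lift f ((?q \<circ> s) y) = y" if "y \<in> topspace Y" for y
    proof -
      have "s y \<in> topspace X"
        using s(1) that by (auto simp: continuous_map_def)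
      then show ?thesis
        using s(2)[OF that] by (simp add: quot_lift_class[OF E f(2)])
    qed
    show "(?q \<circ> s) (quot_lift f c) = c" if "c \<in> topspace (quot_top X E)" for c
    proof -
      obtain x where x: "x \<in> topspace X" "c = E `` {x}"
        using \<open>c \<in> topspace (quot_top X E)\<close> E by (auto simp: topspace_quot_top elim: quotientE)
      then have "E `` {s (f x)} = E `` {x}"
        using equiv_class_eq[OF E s_class[OF x(1)]] by simp
      then show ?thesis
        using x by (simp add: quot_lift_class[OF E f(2)])
    qed
  qed (fact lift)
qed

lemma continuous_map_dprod_const_right:
  assumes "delta_generated X" "y \<in> topspace Y"
  shows "continuous_map X (dprod X Y) (\<lambda>x. (x, y))"
  unfolding dprod_def
  using assms by (intro continuous_map_into_dtop continuous_map_pairedI) auto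

lemma continuous_map_dprod_right:
  assumes "continuous_map Y Y' g"
  shows "continuous_map (dprod X Y) (dprod X Y') (\<lambda>(x, y). (x, g y))"
proof -
  have "continuous_map (prod_topology X Y) (prod_topology X Y') (\<lambda>(x, y). (x, g y))"
    using assms unfolding case_prod_unfold
    by (intro continuous_map_pairedI continuous_map_fst continuous_map_compose[OF continuous_map_snd, unfolded o_def])
  then show ?thesis
    unfolding dprod_def by (rule continuous_map_dtop)
qed

lemma equiv_Id_on_Un_trancl:
  assumes "S \<subseteq> A \<times> A"
  shows "equiv A (Id_on A \<union> (S \<union> S\<inverse>)\<^sup>+)"
proof -
  have "(S \<union> S\<inverse>)\<^sup>+ \<subseteq> A \<times> A"
    using assms by (intro trancl_subset_Sigma) auto
  moreover have "sym ((S \<union> S\<inverse>)\<^sup>+)"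
    by (intro sym_trancl) (auto simp: sym_def)
  ultimately show ?thesis
    unfolding equiv_def refl_on_def sym_def trans_def by (auto dest: trancl_trans)
qed

lemma congruent_Id_on_Un_trancl:
  assumes "f respects S"
  shows "f respects (Id_on A \<union> (S \<union> S\<inverse>)\<^sup>+)"
proof -
  have "f x = f y" if "(x, y) \<in> (S \<union> S\<inverse>)\<^sup>+" for x y
    using that assms by (induction rule: trancl_induct) (auto simp: congruent_def)
  then show ?thesis
    by (auto simp: congruent_def)
qed

definition coend_eval :: "('o, 'm, 'x) ecat_scheme \<Rightarrow> 'o \<Rightarrow> 'o \<times> 'm \<times> 'm \<Rightarrow> 'm" where
  "coend_eval P l' = (\<lambda>(l, \<psi>, \<phi>). Comp P (TenM P \<phi> (Ident P l')) \<psi>)"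

lemma coend_eval_simp [simp]: "coend_eval P l' (l, \<psi>, \<phi>) = Comp P (TenM P \<phi> (Ident P l')) \<psi>"
  by (simp add: coend_eval_def)

lemma topspace_coend_sum:
  "topspace (coend_sum P k l' l'') = (SIGMA l:UNIV. hom P k (TenO P l l') \<times> hom P l l'')"
  by (simp add: coend_sum_def o_def)

context
  fixes P :: "('o, 'm, 'x) ecat_scheme"
  assumes P: "reparam_cat P"
begin

lemma Ident_hom: "Ident P a \<in> hom P a a"
  using P unfolding reparam_cat_def by (elim conjE) simp

lemma Comp_hom: "f \<in> hom P a b \<Longrightarrow> g \<in> hom P b c \<Longrightarrow> Comp P g f \<in> hom P a c"
  using P unfolding reparam_cat_def by (elim conjE) simp

lemma Comp_Ident_left: "f \<in> hom P a b \<Longrightarrow> Comp P (Ident P b) f = f"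
  using P unfolding reparam_cat_def by (elim conjE) simp

lemma Comp_Ident_right: "f \<in> hom P a b \<Longrightarrow> Comp P f (Ident P a) = f"
  using P unfolding reparam_cat_def by (elim conjE) simp

lemma Comp_assoc:
  "f \<in> hom P a b \<Longrightarrow> g \<in> hom P b c \<Longrightarrow> h \<in> hom P c d \<Longrightarrow>
    Comp P h (Comp P g f) = Comp P (Comp P h g) f"
  using P unfolding reparam_cat_def by (elim conjE) simp

lemma delta_generated_Hom: "delta_generated (Hom P a b)"
  using P unfolding reparam_cat_def by (elim conjE) simp

lemma continuous_map_Comp:
  "continuous_map (dprod (Hom P a b) (Hom P b c)) (Hom P a c) (\<lambda>(f, g). Comp P g f)"
  using P unfolding reparam_cat_def by (elim conjE) simp

lemma TenM_hom: "f \<in> hom P a b \<Longrightarrow> g \<in> hom P c d \<Longrightarrow> TenM P f g \<in> hom P (TenO P a c) (TenO P b d)"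
  using P unfolding reparam_cat_def by (elim conjE) simp

lemma TenM_Ident: "TenM P (Ident P a) (Ident P c) = Ident P (TenO P a c)"
  using P unfolding reparam_cat_def by (elim conjE) simp

lemma TenM_Comp:
  "f \<in> hom P a b \<Longrightarrow> g \<in> hom P b e \<Longrightarrow> f' \<in> hom P c d \<Longrightarrow> g' \<in> hom P d e' \<Longrightarrow>
    TenM P (Comp P g f) (Comp P g' f') = Comp P (TenM P g g') (TenM P f f')"
  using P unfolding reparam_cat_def by (elim conjE) simp

lemma continuous_map_TenM:
  "continuous_map (dprod (Hom P a b) (Hom P c d)) (Hom P (TenO P a c) (TenO P b d))
     (\<lambda>(f, g). TenM P f g)"
  using P unfolding reparam_cat_def by (elim conjE) simp

lemma Comp_TenM_Ident:
  assumes "\<phi> \<in> hom P a b" "\<nu> \<in> hom P b c"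
  shows "Comp P (TenM P \<nu> (Ident P l')) (TenM P \<phi> (Ident P l')) = TenM P (Comp P \<nu> \<phi>) (Ident P l')"
  using TenM_Comp[OF assms Ident_hom Ident_hom] Comp_Ident_left[OF Ident_hom]
  by simp

lemma TenM_Ident_Comp_commute:
  assumes "\<phi> \<in> hom P a b" "\<mu> \<in> hom P c d"
  shows "Comp P (TenM P \<phi> (Ident P d)) (TenM P (Ident P a) \<mu>) =
    Comp P (TenM P (Ident P b) \<mu>) (TenM P \<phi> (Ident P c))"
proof -
  have "Comp P (TenM P \<phi> (Ident P d)) (TenM P (Ident P a) \<mu>) = TenM P \<phi> \<mu>"
    using TenM_Comp[OF Ident_hom assms(1) assms(2) Ident_hom] assms
    by (simp add: Comp_Ident_left Comp_Ident_right)
  also have "\<dots> = Comp P (TenM P (Ident P b) \<mu>) (TenM P \<phi> (Ident P c))"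
    using TenM_Comp[OF assms(1) Ident_hom Ident_hom assms(2)] assms
    by (simp add: Comp_Ident_left Comp_Ident_right)
  finally show ?thesis .
qed

lemma coend_eval_Comp_right:
  assumes "\<kappa> \<in> hom P k0 k" "\<psi> \<in> hom P k (TenO P l l')" "\<phi> \<in> hom P l l''"
  shows "coend_eval P l' (l, Comp P \<psi> \<kappa>, \<phi>) = Comp P (coend_eval P l' (l, \<psi>, \<phi>)) \<kappa>"
  using Comp_assoc[OF assms(1,2) TenM_hom[OF assms(3) Ident_hom]] by simp

lemma coend_eval_Comp_left:
  assumes "\<psi> \<in> hom P k (TenO P l l')" "\<phi> \<in> hom P l l1''" "\<nu> \<in> hom P l1'' l2''"
  shows "coend_eval P l' (l, \<psi>, Comp P \<nu> \<phi>) = Comp P (TenM P \<nu> (Ident P l')) (coend_eval P l' (l, \<psi>, \<phi>))"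
proof -
  have "coend_eval P l' (l, \<psi>, Comp P \<nu> \<phi>) =
      Comp P (Comp P (TenM P \<nu> (Ident P l')) (TenM P \<phi> (Ident P l'))) \<psi>"
    using Comp_TenM_Ident[OF assms(2,3)] by simp
  also have "\<dots> = Comp P (TenM P \<nu> (Ident P l')) (Comp P (TenM P \<phi> (Ident P l')) \<psi>)"
    using Comp_assoc[OF assms(1) TenM_hom[OF assms(2) Ident_hom]
        TenM_hom[OF assms(3) Ident_hom]] by simp
  finally show ?thesis
    by simp
qed

lemma coend_eval_whisker:
  assumes "\<mu> \<in> hom P l1' l2'" "\<psi> \<in> hom P k (TenO P l l1')" "\<phi> \<in> hom P l l''"
  shows "coend_eval P l2' (l, Comp P (TenM P (Ident P l) \<mu>) \<psi>, \<phi>) =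
    Comp P (TenM P (Ident P l'') \<mu>) (coend_eval P l1' (l, \<psi>, \<phi>))"
proof -
  have "coend_eval P l2' (l, Comp P (TenM P (Ident P l) \<mu>) \<psi>, \<phi>) =
      Comp P (Comp P (TenM P \<phi> (Ident P l2')) (TenM P (Ident P l) \<mu>)) \<psi>"
    using Comp_assoc[OF assms(2) TenM_hom[OF Ident_hom assms(1)]
        TenM_hom[OF assms(3) Ident_hom]] by simp
  also have "\<dots> = Comp P (Comp P (TenM P (Ident P l'') \<mu>) (TenM P \<phi> (Ident P l1'))) \<psi>"
    using assms(1,3) by (simp add: TenM_Ident_Comp_commute)
  also have "\<dots> = Comp P (TenM P (Ident P l'') \<mu>) (coend_eval P l1' (l, \<psi>, \<phi>))"
    using Comp_assoc[OF assms(2) TenM_hom[OF assms(3) Ident_hom]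
        TenM_hom[OF Ident_hom assms(1)]] by simp
  finally show ?thesis .
qed

lemma coend_eval_Ident:
  "f \<in> hom P k (TenO P l'' l') \<Longrightarrow> coend_eval P l' (l'', f, Ident P l'') = f"
  by (simp add: TenM_Ident Comp_Ident_left)

lemma coend_gen_subset:
  "coend_gen P k l' l'' \<subseteq> topspace (coend_sum P k l' l'') \<times> topspace (coend_sum P k l' l'')"
  unfolding topspace_coend_sum coend_gen_def
  by (auto intro!: Comp_hom TenM_hom Ident_hom)

lemma equiv_coend_eqv: "equiv (topspace (coend_sum P k l' l'')) (coend_eqv P k l' l'')"
  unfolding coend_eqv_def by (rule equiv_Id_on_Un_trancl[OF coend_gen_subset])

lemma coend_eval_respects: "coend_eval P l' respects coend_eqv P k l' l''"
proof -
  have "coend_eval P l' (b, Comp P (TenM P \<kappa> (Ident P l')) \<psi>, \<phi>) = coend_eval P l' (a, \<psi>, Comp P \<phi> \<kappa>)"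
    if "\<kappa> \<in> hom P a b" "\<psi> \<in> hom P k (TenO P a l')" "\<phi> \<in> hom P b l''" for a b \<kappa> \<psi> \<phi>
    using coend_eval_Comp_left[OF that(2,1,3)] by simp
  then have "coend_eval P l' respects coend_gen P k l' l''"
    unfolding congruent_def coend_gen_def by blast
  then show ?thesis
    unfolding coend_eqv_def by (rule congruent_Id_on_Un_trancl)
qed

lemma coend_eqv_canonical:
  assumes "x \<in> topspace (coend_sum P k l' l'')"
  shows "(x, (l'', coend_eval P l' x, Ident P l'')) \<in> coend_eqv P k l' l''"
proof -
  obtain l \<psi> \<phi> where x: "x = (l, \<psi>, \<phi>)" "\<psi> \<in> hom P k (TenO P l l')" "\<phi> \<in> hom P l l''"
    using assms by (auto simp: topspace_coend_sum)
  then have "((l'', coend_eval P l' x, Ident P l''), (l, \<psi>, Comp P (Ident P l'') \<phi>)) \<in> coend_gen P k l' l''"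
    unfolding coend_gen_def using Ident_hom by auto
  then show ?thesis
    using x Comp_Ident_left unfolding coend_eqv_def by auto
qed

lemma continuous_map_TenM_Ident:
  "continuous_map (Hom P a b) (Hom P (TenO P a c) (TenO P b c)) (\<lambda>\<phi>. TenM P \<phi> (Ident P c))"
  using continuous_map_compose[OF continuous_map_dprod_const_right continuous_map_TenM]
  by (simp add: o_def delta_generated_Hom Ident_hom)

lemma continuous_map_coend_eval:
  "continuous_map (coend_sum P k l' l'') (Hom P k (TenO P l'' l')) (coend_eval P l')"
  unfolding coend_sum_def
proof (rule continuous_map_sum_topologyI)
  fix l
  have "continuous_map (dprod (Hom P k (TenO P l l')) (Hom P l l''))
      (dprod (Hom P k (TenO P l l')) (Hom P (TenO P l l') (TenO P l'' l')))
      (\<lambda>(\<psi>, \<phi>). (\<psi>, TenM P \<phi> (Ident P l')))"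
    by (rule continuous_map_dprod_right[OF continuous_map_TenM_Ident])
  from continuous_map_compose[OF this continuous_map_Comp]
  show "continuous_map (dprod (Hom P k (TenO P l l')) (Hom P l l'')) (Hom P k (TenO P l'' l'))
      (\<lambda>z. coend_eval P l' (l, z))"
    by (simp add: o_def case_prod_unfold coend_eval_def)
qed

lemma continuous_map_coend_canonical:
  "continuous_map (Hom P k (TenO P l'' l')) (coend_sum P k l' l'') (\<lambda>f. (l'', f, Ident P l''))"
proof -
  have "continuous_map (Hom P k (TenO P l'' l')) (dprod (Hom P k (TenO P l'' l')) (Hom P l'' l''))
      (\<lambda>f. (f, Ident P l''))"
    by (rule continuous_map_dprod_const_right) (simp_all add: delta_generated_Hom Ident_hom)
  from continuous_map_compose[OF this continuous_map_component_injection[of l'' UNIV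
      "\<lambda>l. dprod (Hom P k (TenO P l l')) (Hom P l l'')"]]
  show ?thesis
    by (simp add: o_def coend_sum_def)
qed

lemma homeomorphic_map_coend:
  "homeomorphic_map (coend_space P k l' l'') (Hom P k (TenO P l'' l')) (quot_lift (coend_eval P l'))"
  unfolding coend_space_def
proof (rule homeomorphic_map_quot_lift[OF equiv_coend_eqv continuous_map_coend_eval coend_eval_respects
      continuous_map_coend_canonical])
  show "coend_eval P l' (l'', f, Ident P l'') = f" if "f \<in> topspace (Hom P k (TenO P l'' l'))" for f
    using that by (rule coend_eval_Ident)
qed (rule coend_eqv_canonical)

lemma quot_lift_coend_class:
  assumes "\<psi> \<in> hom P k (TenO P l l')" "\<phi> \<in> hom P l l''"
  shows "quot_lift (coend_eval P l') (coend_class P k l' l'' (l, \<psi>, \<phi>)) = coend_eval P l' (l, \<psi>, \<phi>)"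
  unfolding coend_class_def
  using assms by (intro quot_lift_class[OF equiv_coend_eqv coend_eval_respects]) (simp add: topspace_coend_sum)

end

theorem lemma3p1:
  fixes P :: "('o, 'm, 'x) ecat_scheme"
  assumes "reparam_cat P"
  shows "\<exists>h :: 'o \<Rightarrow> 'o \<Rightarrow> 'o \<Rightarrow> ('o \<times> 'm \<times> 'm) set \<Rightarrow> 'm.
    \<comment> \<open>for each k, l', l'': a homeomorphism sending [(psi, phi)] to (phi \<otimes> id) psi\<close>
    (\<forall>k l' l''.
       homeomorphic_map (coend_space P k l' l'') (Hom P k (TenO P l'' l')) (h k l' l'') \<and>
       (\<forall>l \<psi> \<phi>. \<psi> \<in> hom P k (TenO P l l') \<and> \<phi> \<in> hom P l l'' \<longrightarrow>
          h k l' l'' (coend_class P k l' l'' (l, \<psi>, \<phi>)) =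
          Comp P (TenM P \<phi> (Ident P l')) \<psi>)) \<and>
    \<comment> \<open>naturality in k (so that it is a morphism of P-spaces)\<close>
    (\<forall>k0 k l' l'' \<kappa> l \<psi> \<phi>. \<kappa> \<in> hom P k0 k \<and> \<psi> \<in> hom P k (TenO P l l') \<and> \<phi> \<in> hom P l l'' \<longrightarrow>
       h k0 l' l'' (coend_class P k0 l' l'' (l, Comp P \<psi> \<kappa>, \<phi>)) =
       Comp P (h k l' l'' (coend_class P k l' l'' (l, \<psi>, \<phi>))) \<kappa>) \<and>
    \<comment> \<open>naturality in l'\<close>
    (\<forall>k l1' l2' l'' \<mu> l \<psi> \<phi>. \<mu> \<in> hom P l1' l2' \<and> \<psi> \<in> hom P k (TenO P l l1') \<and> \<phi> \<in> hom P l l'' \<longrightarrow>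
       h k l2' l'' (coend_class P k l2' l'' (l, Comp P (TenM P (Ident P l) \<mu>) \<psi>, \<phi>)) =
       Comp P (TenM P (Ident P l'') \<mu>) (h k l1' l'' (coend_class P k l1' l'' (l, \<psi>, \<phi>)))) \<and>
    \<comment> \<open>naturality in l''\<close>
    (\<forall>k l' l1'' l2'' \<nu> l \<psi> \<phi>. \<nu> \<in> hom P l1'' l2'' \<and> \<psi> \<in> hom P k (TenO P l l') \<and> \<phi> \<in> hom P l l1'' \<longrightarrow>
       h k l' l2'' (coend_class P k l' l2'' (l, \<psi>, Comp P \<nu> \<phi>)) =
       Comp P (TenM P \<nu> (Ident P l')) (h k l' l1'' (coend_class P k l' l1'' (l, \<psi>, \<phi>))))"
proof (intro exI[of _ "\<lambda>k l' l''. quot_lift (coend_eval P l')"] conjI allI impI; (elim conjE)?)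
  fix k l' l''
  show "homeomorphic_map (coend_space P k l' l'') (Hom P k (TenO P l'' l')) (quot_lift (coend_eval P l'))"
    by (rule homeomorphic_map_coend[OF assms])
  fix l \<psi> \<phi>
  assume "\<psi> \<in> hom P k (TenO P l l')" "\<phi> \<in> hom P l l''"
  then show "quot_lift (coend_eval P l') (coend_class P k l' l'' (l, \<psi>, \<phi>)) =
      Comp P (TenM P \<phi> (Ident P l')) \<psi>"
    by (simp add: quot_lift_coend_class[OF assms])
next
  fix k0 k l' l'' \<kappa> l \<psi> \<phi>
  assume "\<kappa> \<in> hom P k0 k" "\<psi> \<in> hom P k (TenO P l l')" "\<phi> \<in> hom P l l''"
  then show "quot_lift (coend_eval P l') (coend_class P k0 l' l'' (l, Comp P \<psi> \<kappa>, \<phi>)) =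
      Comp P (quot_lift (coend_eval P l') (coend_class P k l' l'' (l, \<psi>, \<phi>))) \<kappa>"
    by (simp add: quot_lift_coend_class[OF assms] Comp_hom[OF assms] coend_eval_Comp_right[OF assms]
        del: coend_eval_simp)
next
  fix k l1' l2' l'' \<mu> l \<psi> \<phi>
  assume "\<mu> \<in> hom P l1' l2'" "\<psi> \<in> hom P k (TenO P l l1')" "\<phi> \<in> hom P l l''"
  then show "quot_lift (coend_eval P l2') (coend_class P k l2' l'' (l, Comp P (TenM P (Ident P l) \<mu>) \<psi>, \<phi>)) =
      Comp P (TenM P (Ident P l'') \<mu>) (quot_lift (coend_eval P l1') (coend_class P k l1' l'' (l, \<psi>, \<phi>)))"
    by (simp add: quot_lift_coend_class[OF assms] Comp_hom[OF assms] TenM_hom[OF assms] Ident_hom[OF assms]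
        coend_eval_whisker[OF assms] del: coend_eval_simp)
next
  fix k l' l1'' l2'' \<nu> l \<psi> \<phi>
  assume "\<nu> \<in> hom P l1'' l2''" "\<psi> \<in> hom P k (TenO P l l')" "\<phi> \<in> hom P l l1''"
  then show "quot_lift (coend_eval P l') (coend_class P k l' l2'' (l, \<psi>, Comp P \<nu> \<phi>)) =
      Comp P (TenM P \<nu> (Ident P l')) (quot_lift (coend_eval P l') (coend_class P k l' l1'' (l, \<psi>, \<phi>)))"
    by (simp add: quot_lift_coend_class[OF assms] Comp_hom[OF assms] coend_eval_Comp_left[OF assms]
        del: coend_eval_simp)
qed

end
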